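(* Let $\mathcal{G}$ be the complete quadrilateral with points $a,b,c,x,y,z$ and lines $\{a,b,c\}$, $\{a,y,z\}$, $\{b,x,z\}$, $\{c,x,y\}$; let $R$ be a commutative ring with $2=0$, $A=M_R(\mathcal{G},1)$, $\ell=a+b+c$ and $s=a+b+c+x+y+z$. Then $A=A^\ell_0\oplus A^\ell_1$, where $A^\ell_0$ and $A^\ell_1$ are the eigenspaces of $\operatorname{ad}_\ell$ for the eigenvalues $0$ and $1$, and \[ A^\ell_0=\langle a,b,c,x+y+z\rangle=\langle a,b,c,s\rangle,\qquad A^\ell_1=\langle \ell x,\ell y\rangle . \]
   Context: For distinct collinear points $p,q$ (written $p\sim q$), $p\wedge q$ is the third point of their line. The nilpotent Matsuo algebra $A=M_R(\mathcal{G},1)$ is the free $R$-module with basis the points and commutative bilinear product $p\cdot q=0$ if $p=q$ or $p\not\sim q$, $p\cdot q=p+q+p\wedge q$ if $p\sim q$. $\operatorname{ad}_\ell(v)=\ell v$; the eigenspace for $\lambda$ is $\{v:\ell v=\lambda v\}$. Angle brackets denote $R$-linear span. *)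

theory Defs
  imports Main
begin

text \<open>A point-line geometry is given by its set of lines (each a 3-element set of points).
 Elements of the free R-module with basis the points are functions 'p \<Rightarrow> 'r (the point
 set is a finite type).\<close>

definition collin :: "'p set set \<Rightarrow> 'p \<Rightarrow> 'p \<Rightarrow> bool" where
  "collin L p q \<longleftrightarrow> p \<noteq> q \<and> (\<exists>l\<in>L. p \<in> l \<and> q \<in> l)"

definition wedge :: "'p set set \<Rightarrow> 'p \<Rightarrow> 'p \<Rightarrow> 'p" where
  "wedge L p q = (THE r. \<exists>l\<in>L. p \<in> l \<and> q \<in> l \<and> r \<in> l \<and> r \<noteq> p \<and> r \<noteq> q)"

definition bvec :: "'p \<Rightarrow> 'p \<Rightarrow> 'r::comm_ring_1" where
  "bvec p = (\<lambda>r. if r = p then 1 else 0)"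

definition vadd :: "('p \<Rightarrow> 'r::comm_ring_1) \<Rightarrow> ('p \<Rightarrow> 'r) \<Rightarrow> 'p \<Rightarrow> 'r" where
  "vadd u v = (\<lambda>r. u r + v r)"

definition vscale :: "'r::comm_ring_1 \<Rightarrow> ('p \<Rightarrow> 'r) \<Rightarrow> 'p \<Rightarrow> 'r" where
  "vscale t v = (\<lambda>r. t * v r)"

definition vzero :: "'p \<Rightarrow> 'r::comm_ring_1" where
  "vzero = (\<lambda>r. 0)"

definition basis_prod :: "'p set set \<Rightarrow> 'p \<Rightarrow> 'p \<Rightarrow> 'p \<Rightarrow> 'r::comm_ring_1" where
  "basis_prod L p q = (if collin L p q
      then vadd (vadd (bvec p) (bvec q)) (bvec (wedge L p q)) else vzero)"

definition mprod :: "'p set set \<Rightarrow> ('p::finite \<Rightarrow> 'r::comm_ring_1) \<Rightarrow> ('p \<Rightarrow> 'r) \<Rightarrow> 'p \<Rightarrow> 'r" where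
  "mprod L u v = (\<lambda>r. \<Sum>p\<in>UNIV. \<Sum>q\<in>UNIV. u p * v q * basis_prod L p q r)"

definition eigensp :: "'p set set \<Rightarrow> ('p::finite \<Rightarrow> 'r::comm_ring_1) \<Rightarrow> 'r \<Rightarrow> ('p \<Rightarrow> 'r) set" where
  "eigensp L l lam = {v. mprod L l v = vscale lam v}"

definition rspan :: "('p \<Rightarrow> 'r::comm_ring_1) set \<Rightarrow> ('p \<Rightarrow> 'r) set" where
  "rspan S = {v. \<exists>c. v = (\<lambda>r. \<Sum>s\<in>S. c s * s r)}"

definition is_direct_sum :: "('p \<Rightarrow> 'r::comm_ring_1) set \<Rightarrow> ('p \<Rightarrow> 'r) set \<Rightarrow> bool" where
  "is_direct_sum U W \<longleftrightarrow> (\<forall>v. \<exists>u w. u \<in> U \<and> w \<in> W \<and> v = vadd u w) \<and> U \<inter> W = {vzero}"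

datatype pt = Pa | Pb | Pc | Px | Py | Pz

instance pt :: finite
proof
  have "(UNIV :: pt set) = {Pa, Pb, Pc, Px, Py, Pz}" by (auto intro: pt.exhaust)
  then show "finite (UNIV :: pt set)" by (metis finite.emptyI finite_insert)
qed

definition quad_lines :: "pt set set" where
  "quad_lines = {{Pa, Pb, Pc}, {Pa, Py, Pz}, {Pb, Px, Pz}, {Pc, Px, Py}}"

end

theory Submission
  imports Defs
begin

text \<open>In characteristic 2 the adjoint action of \<open>\<ell> = a + b + c\<close> is
  \<open>v \<mapsto> (v\<^sub>y + v\<^sub>z, v\<^sub>x + v\<^sub>z, v\<^sub>x + v\<^sub>y, v\<^sub>y + v\<^sub>z, v\<^sub>x + v\<^sub>z, v\<^sub>x + v\<^sub>y)\<close> in the coordinates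
  \<open>(a, b, c, x, y, z)\<close>. This map is idempotent, so \<open>v = (v - \<ell>v) + \<ell>v\<close> splits \<open>A\<close> into
  its kernel and its image, which are the eigenspaces for 0 and 1. The kernel is cut out by
  \<open>v\<^sub>x = v\<^sub>y = v\<^sub>z\<close> and the image by \<open>v\<^sub>a = v\<^sub>x, v\<^sub>b = v\<^sub>y, v\<^sub>c = v\<^sub>z = v\<^sub>x + v\<^sub>y\<close>;
  the stated spanning sets are read off from these equations.\<close>

definition rsubmodule :: "('p \<Rightarrow> 'r::comm_ring_1) set \<Rightarrow> bool" where
  "rsubmodule U \<longleftrightarrow> vzero \<in> U \<and> (\<forall>u\<in>U. \<forall>w\<in>U. vadd u w \<in> U) \<and> (\<forall>t. \<forall>u\<in>U. vscale t u \<in> U)"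

lemma rsubmodule_vzero: "rsubmodule U \<Longrightarrow> vzero \<in> U"
  and rsubmodule_vadd: "rsubmodule U \<Longrightarrow> u \<in> U \<Longrightarrow> w \<in> U \<Longrightarrow> vadd u w \<in> U"
  and rsubmodule_vscale: "rsubmodule U \<Longrightarrow> u \<in> U \<Longrightarrow> vscale t u \<in> U"
  unfolding rsubmodule_def by blast+

lemma rsubmodule_rspan: "rsubmodule (rspan S)"
  unfolding rsubmodule_def
proof (intro conjI ballI allI)
  show "vzero \<in> rspan S"
    unfolding rspan_def vzero_def by (auto intro: exI[of _ "\<lambda>_. 0"])
next
  fix u w assume "u \<in> rspan S" "w \<in> rspan S"
  then obtain c d where "u = (\<lambda>r. \<Sum>s\<in>S. c s * s r)" "w = (\<lambda>r. \<Sum>s\<in>S. d s * s r)"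
    unfolding rspan_def by blast
  then show "vadd u w \<in> rspan S"
    unfolding rspan_def vadd_def
    by (auto intro!: exI[of _ "\<lambda>s. c s + d s"] simp: distrib_right sum.distrib)
next
  fix t u assume "u \<in> rspan S"
  then obtain c where "u = (\<lambda>r. \<Sum>s\<in>S. c s * s r)"
    unfolding rspan_def by blast
  then show "vscale t u \<in> rspan S"
    unfolding rspan_def vscale_def
    by (auto intro!: exI[of _ "\<lambda>s. t * c s"] simp: sum_distrib_left mult.assoc)
qed

lemma rspan_superset:
  assumes "finite S"
  shows "S \<subseteq> rspan S"
proof
  fix u assume "u \<in> S"
  then have "u = (\<lambda>r. \<Sum>s\<in>S. (if s = u then 1 else 0) * s r)"
    using assms by (intro ext) (simp add: if_distrib[where f = "\<lambda>k. k * _"] cong: if_cong)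
  then show "u \<in> rspan S" unfolding rspan_def by (intro CollectI exI)
qed

lemma vscale_in_rspan: "finite S \<Longrightarrow> u \<in> S \<Longrightarrow> vscale t u \<in> rspan S"
  using rspan_superset rsubmodule_vscale[OF rsubmodule_rspan] by blast

lemma rspan_least:
  assumes "finite S" "S \<subseteq> U" "rsubmodule U"
  shows "rspan S \<subseteq> U"
proof
  fix v assume "v \<in> rspan S"
  then obtain c where v: "v = (\<lambda>r. \<Sum>s\<in>S. c s * s r)"
    unfolding rspan_def by blast
  from assms(1,2) have "(\<lambda>r. \<Sum>s\<in>S. c s * s r) \<in> U"
  proof (induction S rule: finite_induct)
    case empty
    then show ?case using rsubmodule_vzero[OF assms(3)] by (simp add: vzero_def)
  next
    case (insert s S)
    then have "vadd (vscale (c s) s) (\<lambda>r. \<Sum>s\<in>S. c s * s r) \<in> U"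
      by (intro rsubmodule_vadd rsubmodule_vscale assms(3)) auto
    with insert.hyps show ?case by (simp add: vadd_def vscale_def)
  qed
  with v show "v \<in> U" by simp
qed

lemma rspan_eqI:
  assumes "finite S" "rsubmodule U" "S \<subseteq> U" "U \<subseteq> rspan S"
  shows "rspan S = U"
  using rspan_least[OF assms(1,3,2)] assms(4) by blast

lemma mprod_vadd_right: "mprod L l (vadd u w) = vadd (mprod L l u) (mprod L l w)"
  unfolding mprod_def vadd_def by (simp add: algebra_simps sum.distrib)

lemma mprod_vscale_right: "mprod L l (vscale t u) = vscale t (mprod L l u)"
  unfolding mprod_def vscale_def by (simp add: algebra_simps sum_distrib_left)

lemma mprod_vzero_right: "mprod L l vzero = vzero"
  unfolding mprod_def vzero_def by simp

lemma rsubmodule_eigensp: "rsubmodule (eigensp L l lam)"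
  unfolding rsubmodule_def eigensp_def
  by (simp add: mprod_vadd_right mprod_vscale_right mprod_vzero_right)
     (simp add: vadd_def vscale_def vzero_def fun_eq_iff algebra_simps)

lemma eigensp_0_Int_eigensp_1: "eigensp L l 0 \<inter> eigensp L l 1 = {vzero}"
proof -
  have "v = vzero" if "v \<in> eigensp L l 0" "v \<in> eigensp L l 1" for v
  proof -
    from that have "vscale 0 v = vscale 1 v" unfolding eigensp_def by simp
    then show ?thesis by (simp add: vscale_def vzero_def fun_eq_iff)
  qed
  then show ?thesis using rsubmodule_vzero[OF rsubmodule_eigensp] by blast
qed

lemma is_direct_sum_eigensp_if_idempotent:
  assumes idem: "\<And>v. mprod L l (mprod L l v) = mprod L l v"
  shows "is_direct_sum (eigensp L l 0) (eigensp L l 1)"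
  unfolding is_direct_sum_def
proof (intro conjI allI eigensp_0_Int_eigensp_1)
  fix v
  define w where "w = mprod L l v"
  have "vadd v (vscale (-1) w) \<in> eigensp L l 0"
    unfolding eigensp_def by (simp add: mprod_vadd_right mprod_vscale_right idem w_def)
      (simp add: vadd_def vscale_def)
  moreover have "w \<in> eigensp L l 1"
    unfolding eigensp_def by (simp add: idem w_def vscale_def)
  moreover have "v = vadd (vadd v (vscale (-1) w)) w"
    by (simp add: vadd_def vscale_def)
  ultimately show "\<exists>u w. u \<in> eigensp L l 0 \<and> w \<in> eigensp L l 1 \<and> v = vadd u w"
    by blast
qed

lemma UNIV_pt: "(UNIV :: pt set) = {Pa, Pb, Pc, Px, Py, Pz}"
  by (auto intro: pt.exhaust)

lemma all_pt: "(\<forall>r. P r) \<longleftrightarrow> P Pa \<and> P Pb \<and> P Pc \<and> P Px \<and> P Py \<and> P Pz"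
  by (metis pt.exhaust)

lemma collin_quad_lines:
  "collin quad_lines p q \<longleftrightarrow>
     p \<noteq> q \<and> (p, q) \<notin> {(Pa, Px), (Px, Pa), (Pb, Py), (Py, Pb), (Pc, Pz), (Pz, Pc)}"
  by (cases p; cases q; simp add: collin_def quad_lines_def)

lemma wedge_quad_lines_eqI:
  assumes "\<exists>l\<in>quad_lines. p \<in> l \<and> q \<in> l \<and> r \<in> l \<and> r \<noteq> p \<and> r \<noteq> q"
    and "\<And>r'. \<exists>l\<in>quad_lines. p \<in> l \<and> q \<in> l \<and> r' \<in> l \<and> r' \<noteq> p \<and> r' \<noteq> q \<Longrightarrow> r' = r"
  shows "wedge quad_lines p q = r"
  unfolding wedge_def using assms by (rule the_equality)

lemma wedge_quad_lines:
  "wedge quad_lines Pa Pb = Pc" "wedge quad_lines Pb Pa = Pc"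
  "wedge quad_lines Pa Pc = Pb" "wedge quad_lines Pc Pa = Pb"
  "wedge quad_lines Pb Pc = Pa" "wedge quad_lines Pc Pb = Pa"
  "wedge quad_lines Pa Py = Pz" "wedge quad_lines Pa Pz = Py"
  "wedge quad_lines Pb Px = Pz" "wedge quad_lines Pb Pz = Px"
  "wedge quad_lines Pc Px = Py" "wedge quad_lines Pc Py = Px"
  by (rule wedge_quad_lines_eqI; simp add: quad_lines_def; blast?)+

abbreviation ell :: "pt \<Rightarrow> 'r::comm_ring_1" where
  "ell \<equiv> vadd (vadd (bvec Pa) (bvec Pb)) (bvec Pc)"

lemma ell_basis_prod:
  "basis_prod quad_lines Pa q r + basis_prod quad_lines Pb q r + basis_prod quad_lines Pc q r =
   (case q of
      Px \<Rightarrow> (case r of Pa \<Rightarrow> 0 | Px \<Rightarrow> 2 | _ \<Rightarrow> 1)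
    | Py \<Rightarrow> (case r of Pb \<Rightarrow> 0 | Py \<Rightarrow> 2 | _ \<Rightarrow> 1)
    | Pz \<Rightarrow> (case r of Pc \<Rightarrow> 0 | Pz \<Rightarrow> 2 | _ \<Rightarrow> 1)
    | _ \<Rightarrow> (case r of Pa \<Rightarrow> 2 | Pb \<Rightarrow> 2 | Pc \<Rightarrow> (2::'r::comm_ring_1) | _ \<Rightarrow> 0))"
  by (cases q; cases r;
      simp add: basis_prod_def collin_quad_lines wedge_quad_lines vadd_def bvec_def vzero_def)

lemma mprod_ell:
  "mprod quad_lines ell v =
   (\<lambda>r. case r of
      Pa \<Rightarrow> 2 * (v Pa + v Pb + v Pc) + v Py + v Pz
    | Pb \<Rightarrow> 2 * (v Pa + v Pb + v Pc) + v Px + v Pz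
    | Pc \<Rightarrow> 2 * (v Pa + v Pb + v Pc) + v Px + v Py
    | Px \<Rightarrow> 2 * v Px + v Py + v Pz
    | Py \<Rightarrow> v Px + 2 * v Py + v Pz
    | Pz \<Rightarrow> v Px + v Py + 2 * (v Pz :: 'r::comm_ring_1))"
    (is "_ = ?rhs")
proof
  fix r
  have ell_sum: "(\<Sum>p\<in>UNIV. ell p * f p) = f Pa + f Pb + f Pc" for f :: "pt \<Rightarrow> 'r"
    by (simp add: UNIV_pt vadd_def bvec_def)
  have "mprod quad_lines ell v r = (\<Sum>q\<in>UNIV. v q * (\<Sum>p\<in>UNIV. ell p * basis_prod quad_lines p q r))"
    unfolding mprod_def by (subst sum.swap) (simp add: sum_distrib_left mult_ac)
  also have "\<dots> = (\<Sum>q\<in>UNIV. v q *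
      (basis_prod quad_lines Pa q r + basis_prod quad_lines Pb q r + basis_prod quad_lines Pc q r))"
    by (simp only: ell_sum)
  finally show "mprod quad_lines ell v r = ?rhs r"
    unfolding ell_basis_prod by (cases r; simp add: UNIV_pt algebra_simps)
qed

lemma mprod_ell_char2:
  assumes "(2::'r::comm_ring_1) = 0"
  shows "mprod quad_lines ell (v :: pt \<Rightarrow> 'r) =
   (\<lambda>r. case r of
      Pa \<Rightarrow> v Py + v Pz | Pb \<Rightarrow> v Px + v Pz | Pc \<Rightarrow> v Px + v Py
    | Px \<Rightarrow> v Py + v Pz | Py \<Rightarrow> v Px + v Pz | Pz \<Rightarrow> v Px + v Py)"
  unfolding mprod_ell assms by simp

lemma char2_add_self:
  assumes "(2::'r::comm_ring_1) = 0"
  shows "t + t = (0 :: 'r)"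
  by (metis assms mult_2 mult_zero_left)

lemma char2_add_self_left:
  assumes "(2::'r::comm_ring_1) = 0"
  shows "t + (t + u) = (u :: 'r)"
  by (simp add: add.assoc[symmetric] char2_add_self[OF assms])

lemma char2_add_eq_0_iff:
  assumes "(2::'r::comm_ring_1) = 0"
  shows "u + w = 0 \<longleftrightarrow> u = (w :: 'r)"
proof -
  have "- w = w" using char2_add_self[OF assms, of w] by (metis add_eq_0_iff)
  then show ?thesis by (metis add_eq_0_iff2)
qed

lemma mprod_ell_idempotent:
  assumes "(2::'r::comm_ring_1) = 0"
  shows "mprod quad_lines ell (mprod quad_lines ell v) = mprod quad_lines ell (v :: pt \<Rightarrow> 'r)"
  by (simp add: mprod_ell_char2[OF assms] fun_eq_iff all_pt add_ac char2_add_self_left[OF assms]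
      assms)

lemma eigensp_ell_0:
  assumes "(2::'r::comm_ring_1) = 0"
  shows "eigensp quad_lines ell 0 = {v :: pt \<Rightarrow> 'r. v Px = v Py \<and> v Py = v Pz}"
  unfolding eigensp_def mprod_ell_char2[OF assms] vscale_def fun_eq_iff
  by (auto simp: all_pt char2_add_eq_0_iff[OF assms])

lemma eigensp_ell_1:
  assumes "(2::'r::comm_ring_1) = 0"
  shows "eigensp quad_lines ell 1 =
    {v :: pt \<Rightarrow> 'r. v Pa = v Px \<and> v Pb = v Py \<and> v Pc = v Pz \<and> v Pz = v Px + v Py}"
  unfolding eigensp_def
proof (intro Collect_cong)
  fix v :: "pt \<Rightarrow> 'r"
  have "mprod quad_lines ell v = vscale 1 v \<longleftrightarrow>
      v Py + v Pz = v Pa \<and> v Px + v Pz = v Pb \<and> v Px + v Py = v Pc \<and>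
      v Py + v Pz = v Px \<and> v Px + v Pz = v Py \<and> v Px + v Py = v Pz"
    by (simp add: mprod_ell_char2[OF assms] vscale_def fun_eq_iff all_pt)
  also have "\<dots> \<longleftrightarrow> v Pa = v Px \<and> v Pb = v Py \<and> v Pc = v Pz \<and> v Pz = v Px + v Py"
    by (auto simp: char2_add_self_left[OF assms] add_ac assms)
  finally show "mprod quad_lines ell v = vscale 1 v \<longleftrightarrow> \<dots>" .
qed

lemma eigensp_ell_0_eq_rspan:
  assumes "(2::'r::comm_ring_1) = 0"
  shows "eigensp quad_lines ell 0 =
    rspan {bvec Pa, bvec Pb, bvec Pc, vadd (vadd (bvec Px) (bvec Py)) (bvec Pz) :: pt \<Rightarrow> 'r}"
    (is "_ = rspan ?S")
proof (rule rspan_eqI[symmetric])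
  show "?S \<subseteq> eigensp quad_lines ell 0"
    unfolding eigensp_ell_0[OF assms] by (simp add: bvec_def vadd_def)
  show "eigensp quad_lines ell 0 \<subseteq> rspan ?S"
  proof
    fix v :: "pt \<Rightarrow> 'r"
    assume "v \<in> eigensp quad_lines ell 0"
    then have "v = vadd (vadd (vadd (vscale (v Pa) (bvec Pa)) (vscale (v Pb) (bvec Pb)))
        (vscale (v Pc) (bvec Pc))) (vscale (v Px) (vadd (vadd (bvec Px) (bvec Py)) (bvec Pz)))"
      unfolding eigensp_ell_0[OF assms] by (simp add: fun_eq_iff all_pt bvec_def vadd_def vscale_def)
    also have "\<dots> \<in> rspan ?S"
      by (intro rsubmodule_vadd[OF rsubmodule_rspan] vscale_in_rspan) simp_all
    finally show "v \<in> rspan ?S" .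
  qed
qed (simp_all add: rsubmodule_eigensp)

lemma eigensp_ell_0_eq_rspan_sum:
  assumes "(2::'r::comm_ring_1) = 0"
  shows "eigensp quad_lines ell 0 = rspan {bvec Pa, bvec Pb, bvec Pc,
      vadd (vadd (vadd (vadd (vadd (bvec Pa) (bvec Pb)) (bvec Pc)) (bvec Px)) (bvec Py)) (bvec Pz)
        :: pt \<Rightarrow> 'r}"
    (is "_ = rspan ?S")
proof (rule rspan_eqI[symmetric])
  show "?S \<subseteq> eigensp quad_lines ell 0"
    unfolding eigensp_ell_0[OF assms] by (simp add: bvec_def vadd_def)
  show "eigensp quad_lines ell 0 \<subseteq> rspan ?S"
  proof
    fix v :: "pt \<Rightarrow> 'r"
    assume "v \<in> eigensp quad_lines ell 0"
    then have "v = vadd (vadd (vadd (vscale (v Pa - v Px) (bvec Pa)) (vscale (v Pb - v Px) (bvec Pb)))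
        (vscale (v Pc - v Px) (bvec Pc)))
        (vscale (v Px) (vadd (vadd (vadd (vadd (vadd (bvec Pa) (bvec Pb)) (bvec Pc)) (bvec Px)) (bvec Py)) (bvec Pz)))"
      unfolding eigensp_ell_0[OF assms] by (simp add: fun_eq_iff all_pt bvec_def vadd_def vscale_def)
    also have "\<dots> \<in> rspan ?S"
      by (intro rsubmodule_vadd[OF rsubmodule_rspan] vscale_in_rspan) simp_all
    finally show "v \<in> rspan ?S" .
  qed
qed (simp_all add: rsubmodule_eigensp)

lemma eigensp_ell_1_eq_rspan:
  assumes "(2::'r::comm_ring_1) = 0"
  shows "eigensp quad_lines ell 1 =
    rspan {mprod quad_lines ell (bvec Px), mprod quad_lines ell (bvec Py) :: pt \<Rightarrow> 'r}"
    (is "_ = rspan ?S")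
proof (rule rspan_eqI[symmetric])
  show "?S \<subseteq> eigensp quad_lines ell 1"
    by (simp add: eigensp_def mprod_ell_idempotent[OF assms] vscale_def)
  show "eigensp quad_lines ell 1 \<subseteq> rspan ?S"
  proof
    fix v :: "pt \<Rightarrow> 'r"
    assume "v \<in> eigensp quad_lines ell 1"
    then have "v = vadd (vscale (v Py) (mprod quad_lines ell (bvec Px)))
        (vscale (v Px) (mprod quad_lines ell (bvec Py)))"
      unfolding eigensp_ell_1[OF assms] mprod_ell_char2[OF assms]
      by (simp add: fun_eq_iff all_pt bvec_def vadd_def vscale_def algebra_simps)
    also have "\<dots> \<in> rspan ?S"
      by (intro rsubmodule_vadd[OF rsubmodule_rspan] vscale_in_rspan) simp_all
    finally show "v \<in> rspan ?S" .
  qed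
qed (simp_all add: rsubmodule_eigensp)

theorem proposition5p12:
  assumes char2: "(2::'r::comm_ring_1) = 0"
  defines "G \<equiv> quad_lines"
    and "a \<equiv> (bvec Pa :: pt \<Rightarrow> 'r)" and "b \<equiv> (bvec Pb :: pt \<Rightarrow> 'r)"
    and "c \<equiv> (bvec Pc :: pt \<Rightarrow> 'r)" and "x \<equiv> (bvec Px :: pt \<Rightarrow> 'r)"
    and "y \<equiv> (bvec Py :: pt \<Rightarrow> 'r)" and "z \<equiv> (bvec Pz :: pt \<Rightarrow> 'r)"
  defines "l \<equiv> vadd (vadd a b) c"
    and "s \<equiv> vadd (vadd (vadd (vadd (vadd a b) c) x) y) z"
  shows "is_direct_sum (eigensp G l 0) (eigensp G l 1)
    \<and> eigensp G l 0 = rspan {a, b, c, vadd (vadd x y) z}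
    \<and> eigensp G l 0 = rspan {a, b, c, s}
    \<and> eigensp G l 1 = rspan {mprod G l x, mprod G l y}"
  unfolding G_def l_def s_def a_def b_def c_def x_def y_def z_def
  using is_direct_sum_eigensp_if_idempotent[OF mprod_ell_idempotent[OF char2]]
    eigensp_ell_0_eq_rspan[OF char2] eigensp_ell_0_eq_rspan_sum[OF char2]
    eigensp_ell_1_eq_rspan[OF char2]
  by blast

end
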